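(* $\mathrm{Pol}(\mathbb{M}_0)$ does not satisfy $\Sigma_2$, but $\mathrm{Pol}(\mathbb{M}_1)$ satisfies $\Sigma_2$.
   Context: $\psi_2=\{(0,1),(1,0),(2,2)\}$; $\mu_2$ is the equivalence relation on $\{0,1,2\}$ with classes $\{0,1\},\{2\}$ and $\rho_2=\{0,1,2\}^2\setminus\mu_2$. $\mathbb{M}_0=(\{0,1,2\};\psi_2,\rho_2,\{0,1\},\{0\},\{1\},\{2\})$ and $\mathbb{M}_1=(\{0,1,2\};\psi_2,\mu_2,\{0\},\{1\},\{2\})$; $\mathrm{Pol}$ denotes the clone of all operations preserving the given relations. A clone satisfies $\Sigma_2$ if it contains a 5-ary symmetric operation $f$ (invariant under all permutations of its arguments) satisfying $f(x,x,y,y,z)\approx f(x,y,y,z,z)$. *)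

theory Defs
  imports "HOL-Combinatorics.Permutations"
begin

text \<open>Operations on the domain D are functions on argument lists; an n-ary
operation is only considered on lists of length n over D.
A relational structure is a domain together with a list of relations,
each given with its arity m as a set of m-tuples (lists of length m).\<close>

definition D3 :: "nat set" where "D3 = {0,1,2}"

definition preserves :: "nat \<Rightarrow> (nat list \<Rightarrow> nat) \<Rightarrow> nat \<Rightarrow> nat list set \<Rightarrow> bool" where
  "preserves n f m R \<longleftrightarrow>
     (\<forall>ts. length ts = n \<longrightarrow> set ts \<subseteq> R \<longrightarrow>
        map (\<lambda>i. f (map (\<lambda>t. t ! i) ts)) [0..<m] \<in> R)"

definition Pol :: "nat set \<Rightarrow> (nat \<times> nat list set) list \<Rightarrow> nat \<Rightarrow> (nat list \<Rightarrow> nat) set" where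
  "Pol A Rs n = {f. (\<forall>xs. length xs = n \<longrightarrow> set xs \<subseteq> A \<longrightarrow> f xs \<in> A) \<and>
                    (\<forall>(m, R) \<in> set Rs. preserves n f m R)}"

definition symmetric_op :: "nat set \<Rightarrow> nat \<Rightarrow> (nat list \<Rightarrow> nat) \<Rightarrow> bool" where
  "symmetric_op A n f \<longleftrightarrow>
     (\<forall>xs \<sigma>. length xs = n \<longrightarrow> set xs \<subseteq> A \<longrightarrow> \<sigma> permutes {..<n} \<longrightarrow>
        f (map (\<lambda>i. xs ! \<sigma> i) [0..<n]) = f xs)"

definition satisfies_Sigma2 :: "nat set \<Rightarrow> (nat \<Rightarrow> (nat list \<Rightarrow> nat) set) \<Rightarrow> bool" where
  "satisfies_Sigma2 A C \<longleftrightarrow>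
     (\<exists>f \<in> C 5. symmetric_op A 5 f \<and>
        (\<forall>x\<in>A. \<forall>y\<in>A. \<forall>z\<in>A. f [x,x,y,y,z] = f [x,y,y,z,z]))"

definition psi2 :: "nat list set" where "psi2 = {[0,1],[1,0],[2,2]}"

definition mu2 :: "nat list set" where
  "mu2 = {[x,y] | x y. (x \<in> {0,1} \<and> y \<in> {0,1}) \<or> (x = 2 \<and> y = 2)}"

definition rho2 :: "nat list set" where
  "rho2 = {[x,y] | x y. x \<in> D3 \<and> y \<in> D3} - mu2"

definition M0 :: "(nat \<times> nat list set) list" where
  "M0 = [(2, psi2), (2, rho2), (1, {[0],[1]}), (1, {[0]}), (1, {[1]}), (1, {[2]})]"

definition M1 :: "(nat \<times> nat list set) list" where
  "M1 = [(2, psi2), (2, mu2), (1, {[0]}), (1, {[1]}), (1, {[2]})]"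

end

theory Submission
  imports Defs
begin

(* Pol(M0): psi2 is the graph of the involution swap01 exchanging 0 and 1, and its only
   diagonal pair is (2,2). A symmetric polymorphism of psi2 therefore sends every tuple whose
   multiset is invariant under swap01, such as (0,0,1,1,2) and (2,2,2,0,1), to 2. Preservation of
   rho2, applied to the columns (0,2),(1,2),(1,2),(2,0),(2,1), then gives f(0,1,1,2,2) <> 2,
   whereas the Sigma_2 identity forces f(0,1,1,2,2) = f(0,0,1,1,2) = 2.
   Pol(M1): the operation that is majority on {0,1}-tuples and 2 otherwise is symmetric,
   idempotent, preserves the block {0,1} of mu2, and commutes with swap01 because the arity
   is odd; majority also satisfies the Sigma_2 identity. *)

lemma symmetric_op_iff_mset:
  "symmetric_op A n f \<longleftrightarrow>
     (\<forall>xs ys. length xs = n \<longrightarrow> set xs \<subseteq> A \<longrightarrow> mset xs = mset ys \<longrightarrow> f xs = f ys)"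
proof (intro iffI allI impI)
  fix xs ys :: "nat list"
  assume sym: "symmetric_op A n f" and "length xs = n" "set xs \<subseteq> A" "mset xs = mset ys"
  then obtain p where "p permutes {..<n}" "permute_list p xs = ys"
    by (metis mset_eq_permutation)
  then show "f xs = f ys"
    using sym \<open>length xs = n\<close> \<open>set xs \<subseteq> A\<close> unfolding symmetric_op_def permute_list_def by metis
next
  assume "\<forall>xs ys. length xs = n \<longrightarrow> set xs \<subseteq> A \<longrightarrow> mset xs = mset ys \<longrightarrow> f xs = f ys"
  then show "symmetric_op A n f"
    unfolding symmetric_op_def by (metis mset_permute_list permute_list_def)
qed

lemma preserves_binaryD:
  assumes "preserves n f 2 R" "list_all2 (\<lambda>x y. [x, y] \<in> R) xs ys" "length xs = n"
  shows "[f xs, f ys] \<in> R"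
proof -
  define ts where "ts = map2 (\<lambda>x y. [x, y]) xs ys"
  have "length ts = length xs \<and> set ts \<subseteq> R \<and> map (\<lambda>t. t ! 0) ts = xs \<and> map (\<lambda>t. t ! 1) ts = ys"
    using assms(2) unfolding ts_def by (induction rule: list_all2_induct) auto
  then have "map (\<lambda>i. f (map (\<lambda>t. t ! i) ts)) [0..<2] \<in> R" and "map (\<lambda>t. t ! 0) ts = xs"
    and "map (\<lambda>t. t ! 1) ts = ys"
    using assms(1,3) unfolding preserves_def by blast+
  then show ?thesis
    by (simp add: upt_rec)
qed

lemma preserves_binaryI:
  assumes "\<forall>t \<in> R. length t = 2"
    and "\<And>xs ys. length xs = n \<Longrightarrow> list_all2 (\<lambda>x y. [x, y] \<in> R) xs ys \<Longrightarrow> [f xs, f ys] \<in> R"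
  shows "preserves n f 2 R"
  unfolding preserves_def
proof (intro allI impI)
  fix ts :: "nat list list"
  assume "length ts = n" "set ts \<subseteq> R"
  have "t = [t ! 0, t ! 1]" if "t \<in> R" for t
    using assms(1) that by (cases t rule: list.exhaust[case_product list.exhaust[of "tl t"]]) auto
  with \<open>set ts \<subseteq> R\<close> have "list_all2 (\<lambda>x y. [x, y] \<in> R) (map (\<lambda>t. t ! 0) ts) (map (\<lambda>t. t ! 1) ts)"
    by (auto simp: list_all2_conv_all_nth intro: subsetD[OF _ nth_mem])
  then show "map (\<lambda>i. f (map (\<lambda>t. t ! i) ts)) [0..<2] \<in> R"
    using assms(2) \<open>length ts = n\<close> by (simp add: upt_rec)
qed

lemma preserves_singleton_iff:
  "preserves n f 1 {[c]} \<longleftrightarrow> f (replicate n c) = c"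
proof -
  have "length ts = n \<and> set ts \<subseteq> {[c]} \<longleftrightarrow> ts = replicate n [c]" for ts :: "nat list list"
    by (auto intro!: replicate_length_same[symmetric])
  then show ?thesis
    unfolding preserves_def by (simp add: imp_conjL[symmetric])
qed

definition swap01 :: "nat \<Rightarrow> nat" where
  "swap01 x = (if x = 0 then 1 else if x = 1 then 0 else x)"

lemma psi2_iff: "[x, y] \<in> psi2 \<longleftrightarrow> x \<in> D3 \<and> y = swap01 x"
  by (auto simp: psi2_def D3_def swap01_def)

lemma psi2_diagonal: "[x, x] \<in> psi2 \<Longrightarrow> x = 2"
  by (auto simp: psi2_def)

lemma mu2_iff: "[x, y] \<in> mu2 \<longleftrightarrow> x \<in> D3 \<and> y \<in> D3 \<and> (x \<in> {0, 1} \<longleftrightarrow> y \<in> {0, 1})"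
  by (auto simp: mu2_def D3_def)

definition maj_or_2 :: "nat list \<Rightarrow> nat" where
  "maj_or_2 xs = (if set xs \<subseteq> {0, 1} then if length xs < 2 * count (mset xs) 1 then 1 else 0 else 2)"

lemma maj_or_2_mset_cong: "mset xs = mset ys \<Longrightarrow> maj_or_2 xs = maj_or_2 ys"
  by (metis maj_or_2_def mset_eq_length mset_eq_setD)

lemma maj_or_2_in_D3: "maj_or_2 xs \<in> D3"
  by (simp add: maj_or_2_def D3_def)

lemma maj_or_2_in_01_iff: "maj_or_2 xs \<in> {0, 1} \<longleftrightarrow> set xs \<subseteq> {0, 1}"
  by (simp add: maj_or_2_def)

lemma maj_or_2_replicate: "n > 0 \<Longrightarrow> c \<in> D3 \<Longrightarrow> maj_or_2 (replicate n c) = c"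
  by (auto simp: maj_or_2_def D3_def)

lemma count_map_swap01:
  "set xs \<subseteq> {0, 1} \<Longrightarrow> count (mset (map swap01 xs)) 1 + count (mset xs) 1 = length xs"
  by (induction xs) (auto simp: swap01_def)

lemma maj_or_2_map_swap01:
  assumes "odd (length xs)"
  shows "maj_or_2 (map swap01 xs) = swap01 (maj_or_2 xs)"
proof (cases "set xs \<subseteq> {0, 1}")
  case True
  then have "set (map swap01 xs) \<subseteq> {0, 1}"
    by (auto simp: swap01_def)
  moreover have "2 * count (mset xs) 1 \<noteq> length xs"
    using assms by presburger
  ultimately show ?thesis
    using True count_map_swap01[OF True] by (auto simp: maj_or_2_def swap01_def)
next
  case False
  then have "\<not> set (map swap01 xs) \<subseteq> {0, 1}"
    by (auto simp: swap01_def split: if_splits)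
  with False show ?thesis
    by (simp add: maj_or_2_def swap01_def)
qed

lemma maj_or_2_Sigma2_identity: "maj_or_2 [x, x, y, y, z] = maj_or_2 [x, y, y, z, z]"
  by (cases "x \<in> {0, 1} \<and> y \<in> {0, 1} \<and> z \<in> {0, 1}") (auto simp: maj_or_2_def)

lemma preserves_psi2_maj_or_2: "odd n \<Longrightarrow> preserves n maj_or_2 2 psi2"
proof (rule preserves_binaryI)
  show "\<forall>t \<in> psi2. length t = 2"
    by (auto simp: psi2_def)
next
  fix xs ys
  assume "odd n" "length xs = n" "list_all2 (\<lambda>x y. [x, y] \<in> psi2) xs ys"
  then have "set xs \<subseteq> D3" "ys = map swap01 xs"
    by (auto simp: psi2_iff list_all2_conv_all_nth set_conv_nth intro: nth_equalityI)
  then show "[maj_or_2 xs, maj_or_2 ys] \<in> psi2"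
    using \<open>odd n\<close> \<open>length xs = n\<close> by (simp add: psi2_iff maj_or_2_in_D3 maj_or_2_map_swap01)
qed

lemma preserves_mu2_maj_or_2: "preserves n maj_or_2 2 mu2"
proof (rule preserves_binaryI)
  show "\<forall>t \<in> mu2. length t = 2"
    by (auto simp: mu2_def)
next
  fix xs ys
  assume "list_all2 (\<lambda>x y. [x, y] \<in> mu2) xs ys"
  then have "set xs \<subseteq> {0, 1} \<longleftrightarrow> set ys \<subseteq> {0, 1}"
    by (induction rule: list_all2_induct) (auto simp: mu2_iff)
  then show "[maj_or_2 xs, maj_or_2 ys] \<in> mu2"
    unfolding mu2_iff maj_or_2_in_01_iff by (simp add: maj_or_2_in_D3)
qed

lemma maj_or_2_in_Pol_M1: "maj_or_2 \<in> Pol D3 M1 5"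
proof -
  have "preserves 5 maj_or_2 1 {[c]}" if "c \<in> D3" for c
    \<comment> \<open>not via simp, which would first rewrite the arity 1 to Suc 0\<close>
    unfolding preserves_singleton_iff using that by (simp add: maj_or_2_replicate)
  then show ?thesis
    using maj_or_2_in_D3 preserves_psi2_maj_or_2[of 5] preserves_mu2_maj_or_2[of 5]
    by (auto simp: Pol_def M1_def D3_def)
qed

lemma Sigma2_Pol_M1: "satisfies_Sigma2 D3 (Pol D3 M1)"
  unfolding satisfies_Sigma2_def symmetric_op_iff_mset
  using maj_or_2_in_Pol_M1 maj_or_2_mset_cong maj_or_2_Sigma2_identity by blast

lemma symmetric_psi2_polymorphism_eq_2:
  assumes "preserves n f 2 psi2" "symmetric_op D3 n f" "length xs = n" "set xs \<subseteq> D3"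
    and "mset (map swap01 xs) = mset xs"
  shows "f xs = 2"
proof -
  have "list_all2 (\<lambda>x y. [x, y] \<in> psi2) xs (map swap01 xs)"
    using assms(4) by (auto simp: list_all2_conv_all_nth psi2_iff)
  then have "[f xs, f (map swap01 xs)] \<in> psi2"
    by (rule preserves_binaryD[OF assms(1) _ assms(3)])
  moreover have "f (map swap01 xs) = f xs"
    using assms(2-5) unfolding symmetric_op_iff_mset by metis
  ultimately show ?thesis
    using psi2_diagonal by simp
qed

lemma not_Sigma2_Pol_M0: "\<not> satisfies_Sigma2 D3 (Pol D3 M0)"
proof
  assume "satisfies_Sigma2 D3 (Pol D3 M0)"
  then obtain f where "f \<in> Pol D3 M0 5" and sym: "symmetric_op D3 5 f"
    and identity: "\<forall>x\<in>D3. \<forall>y\<in>D3. \<forall>z\<in>D3. f [x, x, y, y, z] = f [x, y, y, z, z]"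
    unfolding satisfies_Sigma2_def by blast
  then have psi: "preserves 5 f 2 psi2" and rho: "preserves 5 f 2 rho2"
    by (auto simp: Pol_def M0_def)
  have "f [0, 0, 1, 1, 2] = 2"
    by (rule symmetric_psi2_polymorphism_eq_2[OF psi sym]) (auto simp: D3_def swap01_def)
  moreover have "f [2, 2, 2, 0, 1] = 2"
    by (rule symmetric_psi2_polymorphism_eq_2[OF psi sym]) (auto simp: D3_def swap01_def)
  moreover have "[f [0, 1, 1, 2, 2], f [2, 2, 2, 0, 1]] \<in> rho2"
    by (rule preserves_binaryD[OF rho]) (auto simp: rho2_def mu2_def D3_def)
  moreover have "f [0, 0, 1, 1, 2] = f [0, 1, 1, 2, 2]"
    using identity by (simp add: D3_def)
  ultimately show False
    by (simp add: rho2_def mu2_def)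
qed

theorem lemma6p8:
  shows "\<not> satisfies_Sigma2 D3 (Pol D3 M0) \<and> satisfies_Sigma2 D3 (Pol D3 M1)"
  using not_Sigma2_Pol_M0 Sigma2_Pol_M1 by blast

end
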